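(* Let $Y$ be a real Hilbert space, let $\mu>0$, and let $Q\colon Y\rightrightarrows Y$ be $\mu$-unmonotone with domain $D(Q)=Y$. Suppose also that $-Q-\mu\mathbb{I}_Y$ is maximally monotone. Then $Q$ touches every maximally monotone multifunction on $Y$; that is, for every maximally monotone $M\colon Y\rightrightarrows Y$, the set $G(M)\cap G(Q)$ is a singleton in $Y\times Y$.
   Context: For a multifunction $Q\colon Y\rightrightarrows Y$, $G(Q)=\{(y,q): q\in Qy\}$ is its graph and $D(Q)=\{y: Qy\neq\emptyset\}$ its domain. For $\mu>0$, $Q$ is $\mu$-unmonotone if for all $(y_1,q_1),(y_2,q_2)\in G(Q)$, $\langle y_1-y_2,q_1-q_2\rangle+\mu\|(y_1-y_2,q_1-q_2)\|^2\le 0$, where $\|(a,b)\|^2=\|a\|^2+\|b\|^2$. Two multifunctions $M,Q$ on $Y$ touch if $G(M)\cap G(Q)$ is a singleton. $\mathbb{I}_Y$ is the identity on $Y$ and $-Q-\mu\mathbb{I}_Y$ is the multifunction $y\mapsto\{-q-\mu y: q\in Qy\}$. *)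

theory Defs
  imports "HOL-Analysis.Analysis"
begin

definition graph :: "('a \<Rightarrow> 'a set) \<Rightarrow> ('a \<times> 'a) set" where
  "graph Q = {(y, q). q \<in> Q y}"

definition dom_mf :: "('a \<Rightarrow> 'a set) \<Rightarrow> 'a set" where
  "dom_mf Q = {y. Q y \<noteq> {}}"

definition monotone_mf :: "('a::real_inner \<Rightarrow> 'a set) \<Rightarrow> bool" where
  "monotone_mf M \<longleftrightarrow>
     (\<forall>(y1, q1) \<in> graph M. \<forall>(y2, q2) \<in> graph M. inner (y1 - y2) (q1 - q2) \<ge> 0)"

definition max_monotone_mf :: "('a::real_inner \<Rightarrow> 'a set) \<Rightarrow> bool" where
  "max_monotone_mf M \<longleftrightarrow> monotone_mf M \<and>
     (\<forall>M'. monotone_mf M' \<and> graph M \<subseteq> graph M' \<longrightarrow> graph M' = graph M)"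

definition unmonotone_mf :: "real \<Rightarrow> ('a::real_inner \<Rightarrow> 'a set) \<Rightarrow> bool" where
  "unmonotone_mf \<mu> Q \<longleftrightarrow>
     (\<forall>(y1, q1) \<in> graph Q. \<forall>(y2, q2) \<in> graph Q.
        inner (y1 - y2) (q1 - q2) + \<mu> * ((norm (y1 - y2))\<^sup>2 + (norm (q1 - q2))\<^sup>2) \<le> 0)"

definition touches :: "('a \<Rightarrow> 'a set) \<Rightarrow> ('a \<Rightarrow> 'a set) \<Rightarrow> bool" where
  "touches M Q \<longleftrightarrow> (\<exists>p. graph M \<inter> graph Q = {p})"

definition neg_shift :: "real \<Rightarrow> ('a::real_vector \<Rightarrow> 'a set) \<Rightarrow> ('a \<Rightarrow> 'a set)" where
  "neg_shift \<mu> Q = (\<lambda>y. (\<lambda>q. - q - \<mu> *\<^sub>R y) ` Q y)"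

end

(*
  By Minty's theorem every s is x + m with m \<in> M x,
  and the reflection R s = x - m is nonexpansive. Maximal monotonicity of -Q - \<mu>I gives, again
  by Minty, that every d is y - q with q \<in> Q y, and \<mu>-unmonotonicity makes S d = y + q a
  contraction with constant 1/(1 + \<mu>). A fixed point s = S (R s) from Banach's theorem yields
  x + m = y + q and x - m = y - q, hence a common point (x, m) of both graphs; it is unique since
  a pair that is monotonically and \<mu>-unmonotonically related to (x, m) must equal it.
*)

theory Submission
  imports Defs
begin

lemma monotone_mfD:
  assumes "monotone_mf M" "q1 \<in> M y1" "q2 \<in> M y2"
  shows "0 \<le> inner (y1 - y2) (q1 - q2)"
  using assms unfolding monotone_mf_def graph_def by auto

lemma unmonotone_mfD:
  assumes "unmonotone_mf \<mu> Q" "q1 \<in> Q y1" "q2 \<in> Q y2"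
  shows "inner (y1 - y2) (q1 - q2) + \<mu> * ((norm (y1 - y2))\<^sup>2 + (norm (q1 - q2))\<^sup>2) \<le> 0"
  using assms unfolding unmonotone_mf_def graph_def by auto

lemma max_monotone_mf_imp_monotone_mf: "max_monotone_mf M \<Longrightarrow> monotone_mf M"
  by (simp add: max_monotone_mf_def)

lemma max_monotone_mf_memI:
  fixes A :: "'a::real_inner \<Rightarrow> 'a set"
  assumes max: "max_monotone_mf A"
    and related: "\<And>a b. b \<in> A a \<Longrightarrow> 0 \<le> inner (x - a) (u - b)"
  shows "u \<in> A x"
proof -
  define A' where "A' = (\<lambda>y. if y = x then insert u (A y) else A y)"
  have graph_A': "graph A' = insert (x, u) (graph A)"
    by (auto simp: graph_def A'_def split: if_splits)
  have related': "0 \<le> inner (a - x) (b - u)" if "b \<in> A a" for a b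
    using related[OF that] by (metis inner_minus_left inner_minus_right minus_diff_eq)
  have "monotone_mf A'"
    using max related related' unfolding max_monotone_mf_def monotone_mf_def graph_A'
    by (auto simp: graph_def)
  then have "graph A' = graph A"
    using max graph_A' unfolding max_monotone_mf_def by blast
  then show ?thesis
    using graph_A' by (auto simp: graph_def)
qed

lemma max_monotone_mf_graph_nonempty:
  fixes A :: "'a::real_inner \<Rightarrow> 'a set"
  assumes "max_monotone_mf A"
  shows "graph A \<noteq> {}"
  using max_monotone_mf_memI[OF assms, of 0 0] by (auto simp: graph_def)

lemma norm_convex_combination_power2:
  fixes p q :: "'a::real_inner"
  shows "(norm ((1 - t) *\<^sub>R p + t *\<^sub>R q))\<^sup>2
    = (1 - t) * (norm p)\<^sup>2 + t * (norm q)\<^sup>2 - t * (1 - t) * (norm (p - q))\<^sup>2"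
  unfolding power2_norm_eq_inner
  by (simp add: inner_add_left inner_add_right inner_diff_left inner_diff_right
      inner_commute algebra_simps power2_eq_square)

lemma inner_le_on_convex_hull_monotone:
  fixes G :: "('a::real_inner \<times> 'a) set"
  assumes monotone: "\<And>a b a' b'. (a, b) \<in> G \<Longrightarrow> (a', b') \<in> G \<Longrightarrow> 0 \<le> inner (a - a') (b - b')"
    and hull: "(\<alpha>, \<beta>, e) \<in> convex hull ((\<lambda>(a, b). (a, b, inner a b)) ` G)"
  shows "inner \<alpha> \<beta> \<le> e"
proof -
  obtain S u where S: "finite S" "S \<subseteq> (\<lambda>(a, b). (a, b, inner a b)) ` G"
      "\<And>v. v \<in> S \<Longrightarrow> 0 \<le> u v" "sum u S = 1"
    and combination: "(\<Sum>v\<in>S. u v *\<^sub>R v) = (\<alpha>, \<beta>, e)"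
    using hull unfolding convex_hull_explicit by blast
  define a where "a v = fst v" for v :: "'a \<times> 'a \<times> real"
  define b where "b v = fst (snd v)" for v :: "'a \<times> 'a \<times> real"
  have \<alpha>: "\<alpha> = (\<Sum>v\<in>S. u v *\<^sub>R a v)" and \<beta>: "\<beta> = (\<Sum>v\<in>S. u v *\<^sub>R b v)"
    using arg_cong[OF combination, of fst] arg_cong[OF combination, of "fst \<circ> snd"]
    by (simp_all add: a_def b_def fst_sum snd_sum)
  have "e = (\<Sum>v\<in>S. u v * snd (snd v))"
    using arg_cong[OF combination, of "snd \<circ> snd"] by (simp add: snd_sum)
  also have "\<dots> = (\<Sum>v\<in>S. u v * inner (a v) (b v))"
    using S(2) by (intro sum.cong) (auto simp: a_def b_def)
  finally have e: "e = (\<Sum>v\<in>S. u v * inner (a v) (b v))" .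
  have swap: "(\<Sum>v\<in>S. u v * (\<Sum>w\<in>S. u w * inner (a w) (b v)))
      = (\<Sum>v\<in>S. u v * (\<Sum>w\<in>S. u w * inner (a v) (b w)))"
    unfolding sum_distrib_left by (subst sum.swap) (simp add: algebra_simps)
  have pairwise: "0 \<le> inner (a v - a w) (b v - b w)" if vw: "v \<in> S" "w \<in> S" for v w
  proof -
    have "v \<in> (\<lambda>(a, b). (a, b, inner a b)) ` G" "w \<in> (\<lambda>(a, b). (a, b, inner a b)) ` G"
      using vw S(2) by auto
    then show ?thesis
      using monotone by (auto simp: a_def b_def)
  qed
  have "0 \<le> (\<Sum>v\<in>S. \<Sum>w\<in>S. u v * u w * inner (a v - a w) (b v - b w))"
    using S(3) pairwise by (simp add: sum_nonneg)
  also have "\<dots> = 2 * (\<Sum>v\<in>S. u v * inner (a v) (b v))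
      - 2 * inner (\<Sum>v\<in>S. u v *\<^sub>R a v) (\<Sum>v\<in>S. u v *\<^sub>R b v)"
    by (simp add: inner_diff_left inner_diff_right algebra_simps sum.distrib sum_subtractf
        sum_distrib_left[symmetric] sum_distrib_right[symmetric] inner_sum_left inner_sum_right
        S(4) swap)
  finally show ?thesis
    unfolding \<alpha> \<beta> e by simp
qed

lemma quadratic_convex_combination:
  fixes P :: "'v::real_vector \<Rightarrow> 'a::real_inner" and E :: "'v \<Rightarrow> real"
  assumes "linear P" "linear E"
  shows "(norm (P ((1 - t) *\<^sub>R \<kappa> + t *\<^sub>R \<nu>)))\<^sup>2 + E ((1 - t) *\<^sub>R \<kappa> + t *\<^sub>R \<nu>)
    = (1 - t) * ((norm (P \<kappa>))\<^sup>2 + E \<kappa>) + t * ((norm (P \<nu>))\<^sup>2 + E \<nu>)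
      - t * (1 - t) * (norm (P \<kappa> - P \<nu>))\<^sup>2"
proof -
  have combination: "P ((1 - t) *\<^sub>R \<kappa> + t *\<^sub>R \<nu>) = (1 - t) *\<^sub>R P \<kappa> + t *\<^sub>R P \<nu>"
    "E ((1 - t) *\<^sub>R \<kappa> + t *\<^sub>R \<nu>) = (1 - t) * E \<kappa> + t * E \<nu>"
    using assms by (simp_all add: linear_add linear_scale)
  show ?thesis
    unfolding combination norm_convex_combination_power2 by (simp add: algebra_simps)
qed

lemma convex_quadratic_minimizing_sequence:
  fixes P :: "'v::real_vector \<Rightarrow> 'a::{real_inner, complete_space}" and E :: "'v \<Rightarrow> real"
  defines "f \<kappa> \<equiv> (norm (P \<kappa>))\<^sup>2 + E \<kappa>"
  assumes K: "convex K" "K \<noteq> {}" and linear: "linear P" "linear E" and bdd: "bdd_below (f ` K)"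
  obtains k p where "\<And>n. k n \<in> K" "(\<lambda>n. f (k n)) \<longlonglongrightarrow> Inf (f ` K)" "(\<lambda>n. P (k n)) \<longlonglongrightarrow> p"
proof -
  define m where "m = Inf (f ` K)"
  have m_le: "m \<le> f \<kappa>" if "\<kappa> \<in> K" for \<kappa>
    unfolding m_def using bdd that by (auto intro: cInf_lower)
  have "\<exists>\<kappa>\<in>K. f \<kappa> < m + inverse (real (Suc n))" for n
    using cInf_lessD[of "f ` K" "m + inverse (real (Suc n))"] K(2) unfolding m_def by auto
  then obtain k where kK: "\<And>n. k n \<in> K" and k_small: "\<And>n. f (k n) < m + inverse (real (Suc n))"
    by metis
  have close: "(norm (P (k i) - P (k j)))\<^sup>2 \<le> 2 * (f (k i) - m) + 2 * (f (k j) - m)" for i j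
  proof -
    have "(1 - 1/2) *\<^sub>R k i + (1/2) *\<^sub>R k j \<in> K"
      using K(1) kK by (simp add: convex_def)
    then have "m \<le> f ((1 - 1/2) *\<^sub>R k i + (1/2) *\<^sub>R k j)"
      by (rule m_le)
    then have "m \<le> f (k i) / 2 + f (k j) / 2 - (norm (P (k i) - P (k j)))\<^sup>2 / 4"
      unfolding f_def quadratic_convex_combination[OF linear] by simp
    then show ?thesis
      by (simp add: field_simps)
  qed
  have "Cauchy (\<lambda>n. P (k n))"
  proof (rule CauchyI)
    fix e :: real
    assume "0 < e"
    then obtain N where N: "inverse (real (Suc N)) < e\<^sup>2 / 4"
      using reals_Archimedean[of "e\<^sup>2 / 4"] by auto
    have "norm (P (k i) - P (k j)) < e" if "N \<le> i" "N \<le> j" for i j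
    proof -
      have "inverse (real (Suc i)) \<le> inverse (real (Suc N))" "inverse (real (Suc j)) \<le> inverse (real (Suc N))"
        using that by (simp_all add: le_imp_inverse_le)
      then have "(norm (P (k i) - P (k j)))\<^sup>2 < e\<^sup>2"
        using close[of i j] k_small[of i] k_small[of j] N by argo
      then show ?thesis
        using \<open>0 < e\<close> by (simp add: power2_less_imp_less)
    qed
    then show "\<exists>N. \<forall>i\<ge>N. \<forall>j\<ge>N. norm (P (k i) - P (k j)) < e"
      by blast
  qed
  then obtain p where "(\<lambda>n. P (k n)) \<longlonglongrightarrow> p"
    using Cauchy_convergent_iff convergent_def by blast
  moreover have "(\<lambda>n. f (k n)) \<longlonglongrightarrow> m"
  proof (rule tendsto_sandwich[of "\<lambda>_. m" _ _ "\<lambda>n. m + inverse (real (Suc n))"])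
    show "\<forall>\<^sub>F n in sequentially. m \<le> f (k n)"
      using kK m_le by simp
    show "\<forall>\<^sub>F n in sequentially. f (k n) \<le> m + inverse (real (Suc n))"
      using k_small by (intro always_eventually allI less_imp_le)
    show "(\<lambda>n. m + inverse (real (Suc n))) \<longlonglongrightarrow> m"
      using tendsto_add[OF tendsto_const LIMSEQ_inverse_real_of_nat, of m] by simp
  qed simp
  ultimately show ?thesis
    using that kK unfolding m_def by blast
qed

lemma convex_quadratic_nonneg_bound:
  fixes P :: "'v::real_vector \<Rightarrow> 'a::{real_inner, complete_space}" and E :: "'v \<Rightarrow> real"
  assumes K: "convex K" "K \<noteq> {}" and linear: "linear P" "linear E"
    and nonneg: "\<And>\<kappa>. \<kappa> \<in> K \<Longrightarrow> 0 \<le> (norm (P \<kappa>))\<^sup>2 + E \<kappa>"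
  shows "\<exists>p. \<forall>w\<in>K. (norm (p - P w))\<^sup>2 \<le> (norm (P w))\<^sup>2 + E w"
proof -
  define f where "f \<kappa> = (norm (P \<kappa>))\<^sup>2 + E \<kappa>" for \<kappa>
  have bdd: "bdd_below (f ` K)"
    using nonneg by (intro bdd_belowI[where m = 0]) (auto simp: f_def)
  obtain k p where kK: "\<And>n. k n \<in> K" and f_lim: "(\<lambda>n. f (k n)) \<longlonglongrightarrow> Inf (f ` K)"
    and P_lim: "(\<lambda>n. P (k n)) \<longlonglongrightarrow> p"
    using convex_quadratic_minimizing_sequence[OF K linear] bdd unfolding f_def by blast
  define m where "m = Inf (f ` K)"
  have m_le: "m \<le> f \<kappa>" if "\<kappa> \<in> K" for \<kappa>
    unfolding m_def using bdd that by (auto intro: cInf_lower)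
  have m_nonneg: "0 \<le> m"
    unfolding m_def using K(2) nonneg by (auto simp: f_def intro: cInf_greatest)
  have "(norm (p - P w))\<^sup>2 \<le> f w" if w: "w \<in> K" for w
  proof (rule field_le_mult_one_interval)
    fix s :: real
    assume s: "0 < s" "s < 1"
    define t where "t = 1 - s"
    have "m \<le> f ((1 - t) *\<^sub>R k n + t *\<^sub>R w)" for n
      using K(1) kK w s by (intro m_le) (simp add: convex_def t_def)
    then have "m \<le> (1 - t) * f (k n) + t * f w - t * (1 - t) * (norm (P (k n) - P w))\<^sup>2" for n
      unfolding f_def quadratic_convex_combination[OF linear] .
    moreover have "(\<lambda>n. (1 - t) * f (k n) + t * f w - t * (1 - t) * (norm (P (k n) - P w))\<^sup>2)
        \<longlonglongrightarrow> (1 - t) * m + t * f w - t * (1 - t) * (norm (p - P w))\<^sup>2"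
      unfolding m_def by (intro tendsto_intros f_lim P_lim)
    ultimately have "m \<le> (1 - t) * m + t * f w - t * (1 - t) * (norm (p - P w))\<^sup>2"
      by (intro LIMSEQ_le[OF tendsto_const]) auto
    then have "t * (s * (norm (p - P w))\<^sup>2) \<le> t * (f w - m)"
      by (simp add: t_def algebra_simps)
    then show "s * (norm (p - P w))\<^sup>2 \<le> f w"
      using s m_nonneg by (simp add: t_def)
  qed
  then show ?thesis
    unfolding f_def by blast
qed

text \<open>Minty's theorem, by a Fitzpatrick-type argument: on the convex hull of the lifted shifted
  graph, the quadratic \<open>\<parallel>\<beta> - c\<alpha>\<parallel>\<^sup>2 + 4ce\<close> dominates \<open>\<parallel>\<beta> + c\<alpha>\<parallel>\<^sup>2 \<ge> 0\<close>, and the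
  point \<open>p\<close> obtained for it is \<open>-2cx\<close> for the solution \<open>x\<close>.\<close>

lemma max_monotone_mf_minty:
  fixes A :: "'a::{real_inner, complete_space} \<Rightarrow> 'a set"
  assumes max: "max_monotone_mf A" and c: "0 < c"
  shows "\<exists>x. z - c *\<^sub>R x \<in> A x"
proof -
  define G where "G = {(a, b - z) | a b. b \<in> A a}"
  define K where "K = convex hull ((\<lambda>(a, b). (a, b, inner a b)) ` G)"
  define P where "P \<kappa> = fst (snd \<kappa>) - c *\<^sub>R fst \<kappa>" for \<kappa> :: "'a \<times> 'a \<times> real"
  define E where "E \<kappa> = 4 * c * snd (snd \<kappa>)" for \<kappa> :: "'a \<times> 'a \<times> real"
  have G_monotone: "0 \<le> inner (a - a') (b - b')" if "(a, b) \<in> G" "(a', b') \<in> G" for a b a' b'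
    using that monotone_mfD[OF max_monotone_mf_imp_monotone_mf[OF max]] by (auto simp: G_def)
  have linear: "linear P" "linear E"
    unfolding P_def E_def by (auto intro!: linearI simp: algebra_simps)
  have "G \<noteq> {}"
    using max_monotone_mf_graph_nonempty[OF max] by (auto simp: G_def graph_def)
  then have K: "convex K" "K \<noteq> {}"
    unfolding K_def by auto
  have "0 \<le> (norm (P \<kappa>))\<^sup>2 + E \<kappa>" if "\<kappa> \<in> K" for \<kappa>
  proof -
    obtain \<alpha> \<beta> e where \<kappa>: "\<kappa> = (\<alpha>, \<beta>, e)"
      by (cases \<kappa>)
    have "inner \<alpha> \<beta> \<le> e"
      using inner_le_on_convex_hull_monotone[OF G_monotone] that unfolding \<kappa> K_def by blast
    have "0 \<le> (norm (\<beta> + c *\<^sub>R \<alpha>))\<^sup>2"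
      by simp
    also have "\<dots> = (norm (\<beta> - c *\<^sub>R \<alpha>))\<^sup>2 + 4 * c * inner \<alpha> \<beta>"
      unfolding power2_norm_eq_inner
      by (simp add: inner_add_left inner_add_right inner_diff_left inner_diff_right inner_commute algebra_simps)
    also have "\<dots> \<le> (norm (P \<kappa>))\<^sup>2 + E \<kappa>"
      using \<open>inner \<alpha> \<beta> \<le> e\<close> c by (simp add: \<kappa> P_def E_def)
    finally show ?thesis .
  qed
  then obtain p where p: "\<And>w. w \<in> K \<Longrightarrow> (norm (p - P w))\<^sup>2 \<le> (norm (P w))\<^sup>2 + E w"
    using convex_quadratic_nonneg_bound[OF K linear] by blast
  define x where "x = - (1 / (2 * c)) *\<^sub>R p"
  have p_x: "p = - (2 * c) *\<^sub>R x"
    using c by (simp add: x_def)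
  have "z - c *\<^sub>R x \<in> A x"
  proof (rule max_monotone_mf_memI[OF max])
    fix a b
    assume "b \<in> A a"
    define w where "w = (a, b - z, inner a (b - z))"
    have "w \<in> K"
      unfolding w_def K_def G_def using \<open>b \<in> A a\<close> by (intro hull_inc) auto
    then have "(norm (p - P w))\<^sup>2 - ((norm (P w))\<^sup>2 + E w) \<le> 0"
      using p by simp
    also have "(norm (p - P w))\<^sup>2 - ((norm (P w))\<^sup>2 + E w)
        = 4 * c * inner (x - a) (c *\<^sub>R x + (b - z))"
      unfolding w_def p_x P_def E_def power2_norm_eq_inner
      by (simp add: inner_add_left inner_add_right inner_diff_left inner_diff_right inner_commute algebra_simps)
    finally have "inner (x - a) (c *\<^sub>R x + (b - z)) \<le> 0"
      using c by (simp add: mult_le_0_iff)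
    moreover have "inner (x - a) (z - c *\<^sub>R x - b) = - inner (x - a) (c *\<^sub>R x + (b - z))"
      by (simp add: inner_diff_right inner_add_right)
    ultimately show "0 \<le> inner (x - a) (z - c *\<^sub>R x - b)"
      by simp
  qed
  then show ?thesis
    by blast
qed

lemma norm_diff_le_norm_add_if_inner_nonneg:
  fixes y q :: "'a::real_inner"
  assumes "0 \<le> inner y q"
  shows "norm (y - q) \<le> norm (y + q)"
proof (rule power2_le_imp_le)
  show "(norm (y - q))\<^sup>2 \<le> (norm (y + q))\<^sup>2"
    using assms unfolding power2_norm_eq_inner
    by (simp add: inner_add_left inner_add_right inner_diff_left inner_diff_right inner_commute)
qed simp

lemma norm_add_le_norm_diff_if_unmonotone:
  fixes y q :: "'a::real_inner"
  assumes \<mu>: "0 < \<mu>" and unmonotone: "inner y q + \<mu> * ((norm y)\<^sup>2 + (norm q)\<^sup>2) \<le> 0"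
  shows "(1 + \<mu>) * norm (y + q) \<le> norm (y - q)"
proof (rule power2_le_imp_le)
  define s where "s = (norm y)\<^sup>2 + (norm q)\<^sup>2"
  define i where "i = inner y q"
  have "(norm (y + q))\<^sup>2 = s + 2 * i" "(norm (y - q))\<^sup>2 = s - 2 * i"
    unfolding s_def i_def power2_norm_eq_inner
    by (simp_all add: inner_add_left inner_add_right inner_diff_left inner_diff_right inner_commute)
  then have "((1 + \<mu>) * norm (y + q))\<^sup>2 - (norm (y - q))\<^sup>2 = (1 + \<mu>)\<^sup>2 * (s + 2 * i) - (s - 2 * i)"
    by (simp only: power_mult_distrib)
  also have "\<dots> = (2 * \<mu> + \<mu>\<^sup>2) * s + (2 * (1 + \<mu>)\<^sup>2 + 2) * i"
    by (simp add: algebra_simps power2_eq_square)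
  also have "\<dots> \<le> (2 * \<mu> + \<mu>\<^sup>2) * s + (2 * (1 + \<mu>)\<^sup>2 + 2) * (- \<mu> * s)"
    using unmonotone unfolding s_def i_def by (intro add_left_mono mult_left_mono) auto
  also have "\<dots> = - ((2 * \<mu> + 3 * \<mu>\<^sup>2 + 2 * \<mu> ^ 3) * s)"
    by (simp add: algebra_simps power2_eq_square power3_eq_cube)
  also have "\<dots> \<le> 0"
    using \<mu> unfolding s_def neg_le_0_iff_le by (intro mult_nonneg_nonneg) auto
  finally show "((1 + \<mu>) * norm (y + q))\<^sup>2 \<le> (norm (y - q))\<^sup>2"
    by (simp only: diff_le_0_iff_le)
qed simp

lemma max_monotone_mf_reflection:
  fixes M :: "'a::{real_inner, complete_space} \<Rightarrow> 'a set"
  assumes max: "max_monotone_mf M"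
  obtains R where "\<And>s. \<exists>x m. m \<in> M x \<and> s = x + m \<and> R s = x - m"
    and "\<And>s1 s2. dist (R s1) (R s2) \<le> dist s1 s2"
proof -
  have "\<forall>s. \<exists>r x m. m \<in> M x \<and> s = x + m \<and> r = x - m"
    using max_monotone_mf_minty[OF max, of 1] by force
  then have "\<exists>R. \<forall>s. \<exists>x m. m \<in> M x \<and> s = x + m \<and> R s = x - m"
    by (rule choice)
  then obtain R where R: "\<And>s. \<exists>x m. m \<in> M x \<and> s = x + m \<and> R s = x - m"
    by blast
  have "dist (R s1) (R s2) \<le> dist s1 s2" for s1 s2
  proof -
    obtain x1 m1 where 1: "m1 \<in> M x1" "s1 = x1 + m1" "R s1 = x1 - m1"
      using R by blast
    obtain x2 m2 where 2: "m2 \<in> M x2" "s2 = x2 + m2" "R s2 = x2 - m2"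
      using R by blast
    have "0 \<le> inner (x1 - x2) (m1 - m2)"
      using monotone_mfD[OF max_monotone_mf_imp_monotone_mf[OF max] 1(1) 2(1)] .
    then have "norm ((x1 - x2) - (m1 - m2)) \<le> norm ((x1 - x2) + (m1 - m2))"
      by (rule norm_diff_le_norm_add_if_inner_nonneg)
    moreover have "(x1 - x2) - (m1 - m2) = R s1 - R s2"
      unfolding 1(3) 2(3) by (simp add: algebra_simps)
    moreover have "(x1 - x2) + (m1 - m2) = s1 - s2"
      unfolding 1(2) 2(2) by (simp add: algebra_simps)
    ultimately show ?thesis
      by (simp add: dist_norm)
  qed
  then show thesis
    using that R by blast
qed

lemma unmonotone_mf_cayley:
  fixes Q :: "'a::{real_inner, complete_space} \<Rightarrow> 'a set"
  assumes \<mu>: "0 < \<mu>" and unmonotone: "unmonotone_mf \<mu> Q"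
    and max: "max_monotone_mf (neg_shift \<mu> Q)"
  obtains S where "\<And>d. \<exists>y q. q \<in> Q y \<and> d = y - q \<and> S d = y + q"
    and "\<And>d1 d2. (1 + \<mu>) * dist (S d1) (S d2) \<le> dist d1 d2"
proof -
  have "\<forall>d. \<exists>r y q. q \<in> Q y \<and> d = y - q \<and> r = y + q"
  proof
    fix d
    obtain y where "d - (1 + \<mu>) *\<^sub>R y \<in> neg_shift \<mu> Q y"
      using max_monotone_mf_minty[OF max, of "1 + \<mu>" d] \<mu> by auto
    then obtain q where "q \<in> Q y" "d - (1 + \<mu>) *\<^sub>R y = - q - \<mu> *\<^sub>R y"
      unfolding neg_shift_def by auto
    then have "q \<in> Q y \<and> d = y - q"
      by (simp add: algebra_simps)
    then show "\<exists>r y q. q \<in> Q y \<and> d = y - q \<and> r = y + q"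
      by blast
  qed
  then have "\<exists>S. \<forall>d. \<exists>y q. q \<in> Q y \<and> d = y - q \<and> S d = y + q"
    by (rule choice)
  then obtain S where S: "\<And>d. \<exists>y q. q \<in> Q y \<and> d = y - q \<and> S d = y + q"
    by blast
  have "(1 + \<mu>) * dist (S d1) (S d2) \<le> dist d1 d2" for d1 d2
  proof -
    obtain y1 q1 where 1: "q1 \<in> Q y1" "d1 = y1 - q1" "S d1 = y1 + q1"
      using S by blast
    obtain y2 q2 where 2: "q2 \<in> Q y2" "d2 = y2 - q2" "S d2 = y2 + q2"
      using S by blast
    have "(1 + \<mu>) * norm ((y1 - y2) + (q1 - q2)) \<le> norm ((y1 - y2) - (q1 - q2))"
      using \<mu> unmonotone_mfD[OF unmonotone 1(1) 2(1)] by (rule norm_add_le_norm_diff_if_unmonotone)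
    moreover have "(y1 - y2) + (q1 - q2) = S d1 - S d2"
      unfolding 1(3) 2(3) by (simp add: algebra_simps)
    moreover have "(y1 - y2) - (q1 - q2) = d1 - d2"
      unfolding 1(2) 2(2) by (simp add: algebra_simps)
    ultimately show ?thesis
      by (simp add: dist_norm)
  qed
  then show thesis
    using that S by blast
qed

lemma touches_if_monotone_unmonotone_common_point:
  assumes M: "monotone_mf M" and Q: "unmonotone_mf \<mu> Q" and \<mu>: "0 < \<mu>"
    and common: "m \<in> M x" "m \<in> Q x"
  shows "touches M Q"
proof -
  have unique: "a = x \<and> b = m" if "b \<in> M a" "b \<in> Q a" for a b
  proof -
    have "0 \<le> inner (a - x) (b - m)"
      using monotone_mfD[OF M that(1) common(1)] .
    moreover have "inner (a - x) (b - m) + \<mu> * ((norm (a - x))\<^sup>2 + (norm (b - m))\<^sup>2) \<le> 0"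
      using unmonotone_mfD[OF Q that(2) common(2)] .
    ultimately have "\<mu> * ((norm (a - x))\<^sup>2 + (norm (b - m))\<^sup>2) \<le> 0"
      by (meson add_le_same_cancel1 order_trans)
    then have "(norm (a - x))\<^sup>2 + (norm (b - m))\<^sup>2 \<le> 0"
      using \<mu> by (simp add: mult_le_0_iff)
    then have "(norm (a - x))\<^sup>2 + (norm (b - m))\<^sup>2 = 0"
      by (meson antisym add_nonneg_nonneg zero_le_power2)
    then show ?thesis
      by simp
  qed
  have "graph M \<inter> graph Q = {(x, m)}"
  proof (intro equalityI subsetI)
    fix p
    assume "p \<in> graph M \<inter> graph Q"
    then show "p \<in> {(x, m)}"
      using unique by (cases p) (auto simp: graph_def)
  next
    fix p
    assume "p \<in> {(x, m)}"
    then show "p \<in> graph M \<inter> graph Q"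
      using common by (simp add: graph_def)
  qed
  then show ?thesis
    unfolding touches_def by blast
qed

lemma fixed_point_contraction_comp_nonexpansive:
  fixes R S :: "'a::complete_space \<Rightarrow> 'a"
  assumes \<mu>: "0 < \<mu>"
    and R: "\<And>s1 s2. dist (R s1) (R s2) \<le> dist s1 s2"
    and S: "\<And>d1 d2. (1 + \<mu>) * dist (S d1) (S d2) \<le> dist d1 d2"
  obtains s where "S (R s) = s"
proof -
  have "\<exists>!s. S (R s) = s"
  proof (rule banach_fix_type)
    show "0 \<le> 1 / (1 + \<mu>)" "1 / (1 + \<mu>) < 1"
      using \<mu> by auto
    show "\<forall>s1 s2. dist (S (R s1)) (S (R s2)) \<le> 1 / (1 + \<mu>) * dist s1 s2"
    proof (intro allI)
      fix s1 s2
      have "(1 + \<mu>) * dist (S (R s1)) (S (R s2)) \<le> dist s1 s2"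
        using S[of "R s1" "R s2"] R[of s1 s2] by (rule order.trans)
      then show "dist (S (R s1)) (S (R s2)) \<le> 1 / (1 + \<mu>) * dist s1 s2"
        using \<mu> by (simp add: field_simps)
    qed
  qed
  then show thesis
    using that by blast
qed

lemma add_eq_diff_eq_imp_eq:
  fixes x m y q :: "'a::real_vector"
  assumes "x + m = y + q" "x - m = y - q"
  shows "x = y \<and> m = q"
proof -
  have "(x + m) + (x - m) = (y + q) + (y - q)"
    using assms by (simp only:)
  then have "2 *\<^sub>R x = 2 *\<^sub>R y"
    by (simp add: scaleR_2)
  then show ?thesis
    using assms(1) by simp
qed

theorem theorem2p6:
  fixes Q :: "'a::{real_inner, complete_space} \<Rightarrow> 'a set" and \<mu> :: real
  assumes "\<mu> > 0"
    and "unmonotone_mf \<mu> Q"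
    and "dom_mf Q = UNIV"
    and "max_monotone_mf (neg_shift \<mu> Q)"
  shows "\<forall>M :: 'a \<Rightarrow> 'a set. max_monotone_mf M \<longrightarrow> touches M Q"
proof (intro allI impI)
  fix M :: "'a \<Rightarrow> 'a set"
  assume M: "max_monotone_mf M"
  obtain R where R: "\<And>s. \<exists>x m. m \<in> M x \<and> s = x + m \<and> R s = x - m"
    and R_nonexpansive: "\<And>s1 s2. dist (R s1) (R s2) \<le> dist s1 s2"
    using max_monotone_mf_reflection[OF M] by blast
  obtain S where S: "\<And>d. \<exists>y q. q \<in> Q y \<and> d = y - q \<and> S d = y + q"
    and S_contraction: "\<And>d1 d2. (1 + \<mu>) * dist (S d1) (S d2) \<le> dist d1 d2"
    using unmonotone_mf_cayley[OF assms(1,2,4)] by blast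
  obtain s where fixed: "S (R s) = s"
    using fixed_point_contraction_comp_nonexpansive[OF assms(1) R_nonexpansive S_contraction] .
  obtain x m where xm: "m \<in> M x" "s = x + m" "R s = x - m"
    using R by blast
  obtain y q where yq: "q \<in> Q y" "R s = y - q" "S (R s) = y + q"
    using S by blast
  have "x = y \<and> m = q"
    using add_eq_diff_eq_imp_eq xm(2,3) yq(2,3) fixed by metis
  then show "touches M Q"
    using touches_if_monotone_unmonotone_common_point
      [OF max_monotone_mf_imp_monotone_mf[OF M] assms(2,1) xm(1)] yq(1) by simp
qed

end
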